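(* Let $n\ge4$ be even and $x\in Y_1$. If $1\le i\le j\le n-1$, then $\nu_i(x)\le\nu_j(x)$ in the Bruhat order of $\mathcal F_n$.
   Context: $s_i=(i,i+1)$; permutations compose right to left. $\mathcal F_m$ is the set of fixed-point-free involutions in $S_m$ with conjugation action, height $\ell/2$, and Bruhat order the weakest partial order with $z\le tzt$ for transpositions $t$ with $\ell(z)\le\ell(tzt)$. Regard $\mathcal F_{n-2}\subset S_n$; $w_0$ longest element of $S_n$; $Y_1=\{w_0zs_{n-1}w_0:z\in\mathcal F_{n-2}\}$; $\sigma_j=s_j\cdots s_1$; $\nu_j(x)=\sigma_jx\sigma_j^{-1}$. *)

theory Defs
  imports "HOL-Combinatorics.Combinatorics"
begin

text \<open>Permutations of {1..n} are functions nat => nat that permute {1..n}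
  (fixing everything else). Composition is function composition (right to left).\<close>

definition S :: "nat \<Rightarrow> (nat \<Rightarrow> nat) set" where
  "S n = {p. p permutes {1..n}}"

definition len :: "nat \<Rightarrow> (nat \<Rightarrow> nat) \<Rightarrow> nat" where
  "len n p = card {(i, j). 1 \<le> i \<and> i < j \<and> j \<le> n \<and> p j < p i}"

definition FPF :: "nat \<Rightarrow> (nat \<Rightarrow> nat) set" where
  "FPF m = {z. z permutes {1..m} \<and> z \<circ> z = id \<and> (\<forall>i\<in>{1..m}. z i \<noteq> i)}"

definition s :: "nat \<Rightarrow> nat \<Rightarrow> nat" where
  "s i = transpose i (Suc i)"

definition w0 :: "nat \<Rightarrow> nat \<Rightarrow> nat" where
  "w0 n = (\<lambda>i. if 1 \<le> i \<and> i \<le> n then n + 1 - i else i)"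

fun sigma :: "nat \<Rightarrow> nat \<Rightarrow> nat" where
  "sigma 0 = id"
| "sigma (Suc j) = s (Suc j) \<circ> sigma j"

definition nu :: "nat \<Rightarrow> (nat \<Rightarrow> nat) \<Rightarrow> nat \<Rightarrow> nat" where
  "nu j x = sigma j \<circ> x \<circ> inv (sigma j)"

definition Y1 :: "nat \<Rightarrow> (nat \<Rightarrow> nat) set" where
  "Y1 n = {w0 n \<circ> z \<circ> s (n - 1) \<circ> w0 n | z. z \<in> FPF (n - 2)}"

definition bruhat_step :: "nat \<Rightarrow> (nat \<Rightarrow> nat) \<Rightarrow> (nat \<Rightarrow> nat) \<Rightarrow> bool" where
  "bruhat_step n y z \<longleftrightarrow> y \<in> FPF n \<and>
     (\<exists>a b. 1 \<le> a \<and> a < b \<and> b \<le> n \<and>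
        z = transpose a b \<circ> y \<circ> transpose a b \<and> len n y \<le> len n z)"

definition bruhat_le :: "nat \<Rightarrow> (nat \<Rightarrow> nat) \<Rightarrow> (nat \<Rightarrow> nat) \<Rightarrow> bool" where
  "bruhat_le n y z \<longleftrightarrow> y \<in> FPF n \<and> z \<in> FPF n \<and> (bruhat_step n)\<^sup>*\<^sup>* y z"

end

theory Submission
  imports Defs
begin

text \<open>
  Every \<open>x \<in> Y\<^sub>1\<close> is a fixed-point-free involution with \<open>x(1) = 2\<close>. Since \<open>\<sigma>\<^sub>k\<close> sends
  \<open>1 \<mapsto> k+1\<close> and \<open>2 \<mapsto> 1\<close>, the involution \<open>\<nu>\<^sub>k(x)\<close> maps \<open>k+1\<close> to \<open>1\<close>, so \<open>k+1\<close> is an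
  ascent of \<open>\<nu>\<^sub>k(x)\<close>. Now \<open>\<nu>\<^sub>k\<^sub>+\<^sub>1(x) = s\<^sub>k\<^sub>+\<^sub>1 \<nu>\<^sub>k(x) s\<^sub>k\<^sub>+\<^sub>1\<close>, and conjugating an involution
  by a simple transposition at an ascent does not decrease the length; hence each
  \<open>\<nu>\<^sub>k(x) \<le> \<nu>\<^sub>k\<^sub>+\<^sub>1(x)\<close> is a defining relation of the Bruhat order, and chaining them
  from \<open>i\<close> to \<open>j\<close> gives the claim.
\<close>

lemma s_involutive [simp]: "s k (s k y) = y"
  by (simp add: s_def)

lemma s_less_s:
  assumes "i < j" and "\<not> (i = k \<and> j = Suc k)"
  shows "s k i < s k j"
  using assms by (auto simp: s_def transpose_def)

lemma s_permutes: "1 \<le> k \<Longrightarrow> Suc k \<le> n \<Longrightarrow> s k permutes {1..n}"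
  by (simp add: s_def permutes_swap_id)

lemma len_le_len_conj_s:
  assumes involution: "w \<circ> w = id" and k: "1 \<le> k" "Suc k \<le> n" and ascent: "w k < w (Suc k)"
  shows "len n w \<le> len n (s k \<circ> w \<circ> s k)"
proof -
  let ?A = "{(i, j). 1 \<le> i \<and> i < j \<and> j \<le> n \<and> w j < w i}"
  let ?B = "{(i, j). 1 \<le> i \<and> i < j \<and> j \<le> n \<and> (s k \<circ> w \<circ> s k) j < (s k \<circ> w \<circ> s k) i}"
  let ?f = "\<lambda>(i, j). (s k i, s k j)"
  have ww: "w (w y) = y" for y
    using pointfree_idE[OF involution] .
  have s_in: "y \<in> {1..n} \<Longrightarrow> s k y \<in> {1..n}" for y
    using permutes_in_image[OF s_permutes[OF k]] by simp
  \<comment> \<open>\<open>s\<^sub>k\<close> preserves the order of every pair except \<open>(k, k+1)\<close>; the ascent rules this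
    pair out both among the positions and, since \<open>w\<close> is an involution, among the values.\<close>
  have "?f ` ?A \<subseteq> ?B"
  proof
    fix p assume "p \<in> ?f ` ?A"
    then obtain i j where p: "p = (s k i, s k j)" and ij: "1 \<le> i" "i < j" "j \<le> n" "w j < w i"
      by auto
    have "\<not> (i = k \<and> j = Suc k)" and "\<not> (w j = k \<and> w i = Suc k)"
      using ij ascent ww by (metis less_asym)+
    then have "s k i < s k j" and "s k (w j) < s k (w i)"
      using ij by (simp_all add: s_less_s)
    moreover have "1 \<le> s k i" "s k j \<le> n"
      using s_in[of i] s_in[of j] ij by auto
    ultimately show "p \<in> ?B"
      using p by simp
  qed
  moreover have "inj_on ?f ?A"
    by (rule inj_on_inverseI[where g = ?f]) auto
  moreover have "finite ?B"
    by (rule finite_subset[of _ "{1..n} \<times> {1..n}"]) auto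
  ultimately have "card ?A \<le> card ?B"
    using card_inj_on_le by blast
  then show ?thesis
    unfolding len_def by simp
qed

lemma bij_sigma: "bij (sigma j)"
  by (induction j) (simp_all only: sigma.simps s_def bij_id bij_comp bij_transpose)

lemma sigma_permutes: "Suc j \<le> n \<Longrightarrow> sigma j permutes {1..n}"
proof (induction j)
  case 0
  then show ?case by (simp add: permutes_id flip: id_def)
next
  case (Suc j)
  then show ?case
    by (simp only: sigma.simps) (intro permutes_compose s_permutes; simp)
qed

lemma sigma_one: "sigma j 1 = Suc j"
  by (induction j) (auto simp: s_def)

lemma sigma_two: "1 \<le> j \<Longrightarrow> sigma j 2 = 1"
proof (induction j)
  case 0
  then show ?case by simp
next
  case (Suc j)
  then show ?case
    by (cases j) (auto simp: s_def transpose_def)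
qed

lemma nu_Suc: "nu (Suc j) x = s (Suc j) \<circ> nu j x \<circ> s (Suc j)"
  unfolding nu_def by (simp add: o_inv_distrib bij_sigma s_def o_assoc)

lemma nu_apply_Suc:
  assumes "1 \<le> j" and "x 1 = 2"
  shows "nu j x (Suc j) = 1"
proof -
  have "inv (sigma j) (Suc j) = 1"
    using bij_sigma[of j] sigma_one[of j] by (metis bij_is_inj inv_f_f)
  then show ?thesis
    unfolding nu_def using assms sigma_two by simp
qed

lemma FPF_conj:
  assumes p: "p permutes {1..n}" and w: "w \<in> FPF n"
  shows "p \<circ> w \<circ> inv p \<in> FPF n"
proof -
  have wp: "w permutes {1..n}" and ww: "w \<circ> w = id" and fp: "\<forall>i\<in>{1..n}. w i \<noteq> i"
    using w unfolding FPF_def by auto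
  have "p \<circ> w \<circ> inv p permutes {1..n}"
    by (intro permutes_compose wp p permutes_inv)
  moreover have "(p \<circ> w \<circ> inv p) \<circ> (p \<circ> w \<circ> inv p) = id"
    using pointfree_idE[OF ww] by (simp add: fun_eq_iff permutes_inverses[OF p])
  moreover have "(p \<circ> w \<circ> inv p) i \<noteq> i" if i: "i \<in> {1..n}" for i
  proof -
    have "inv p i \<in> {1..n}"
      using permutes_in_image[OF permutes_inv[OF p]] i by simp
    then show ?thesis
      using fp by (metis comp_apply permutes_inverses(2)[OF p])
  qed
  ultimately show ?thesis
    unfolding FPF_def by auto
qed

lemma FPF_extend_transpose:
  assumes "z \<in> FPF m"
  shows "z \<circ> transpose (Suc m) (Suc (Suc m)) \<in> FPF (Suc (Suc m))"
proof -
  let ?t = "transpose (Suc m) (Suc (Suc m))"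
  have zp: "z permutes {1..m}" and zz: "z \<circ> z = id" and zf: "\<forall>i\<in>{1..m}. z i \<noteq> i"
    using assms unfolding FPF_def by auto
  have fix_ends: "z (Suc m) = Suc m" "z (Suc (Suc m)) = Suc (Suc m)"
    using zp by (auto simp: permutes_def)
  have commute: "?t \<circ> z = z \<circ> ?t"
    using fix_ends transpose_comp_eq[OF permutes_bij[OF zp]]
    by (metis bij_inv_eq_iff permutes_bij[OF zp])
  have "z \<circ> ?t permutes {1..Suc (Suc m)}"
    by (intro permutes_compose permutes_swap_id permutes_subset[OF zp]) auto
  moreover have "(z \<circ> ?t) \<circ> (z \<circ> ?t) = id"
    by (metis commute comp_assoc comp_id transpose_comp_involutory zz)
  moreover have "(z \<circ> ?t) i \<noteq> i" if "i \<in> {1..Suc (Suc m)}" for i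
    using that zf fix_ends by (cases "i \<le> m") (auto simp: le_Suc_eq)
  ultimately show ?thesis
    unfolding FPF_def by auto
qed

lemma w0_involutive [simp]: "w0 n (w0 n i) = i"
  unfolding w0_def by auto

lemma w0_permutes: "w0 n permutes {1..n}"
  unfolding permutes_def
proof (intro conjI allI impI)
  show "w0 n x = x" if "x \<notin> {1..n}" for x
    using that by (auto simp: w0_def)
  show "\<exists>!x. w0 n x = y" for y
    by (metis w0_involutive)
qed

lemma inv_w0: "inv (w0 n) = w0 n"
  by (rule inv_unique_comp) (simp_all add: fun_eq_iff)

lemma Y1_elim:
  assumes "2 \<le> n" and "x \<in> Y1 n"
  obtains m z where "n = Suc (Suc m)" and "z \<in> FPF m"
    and "x = w0 n \<circ> (z \<circ> transpose (Suc m) (Suc (Suc m))) \<circ> inv (w0 n)"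
proof -
  obtain m where n: "n = Suc (Suc m)"
    using assms(1) by (metis add_2_eq_Suc le_iff_add)
  then show ?thesis
    using assms(2) that unfolding Y1_def by (auto simp: s_def inv_w0 o_assoc)
qed

lemma Y1_FPF: "2 \<le> n \<Longrightarrow> x \<in> Y1 n \<Longrightarrow> x \<in> FPF n"
  by (metis Y1_elim FPF_conj FPF_extend_transpose w0_permutes)

lemma Y1_apply_one:
  assumes "2 \<le> n" and "x \<in> Y1 n"
  shows "x 1 = 2"
proof -
  obtain m z where n: "n = Suc (Suc m)" and z: "z \<in> FPF m"
    and x: "x = w0 n \<circ> (z \<circ> transpose (Suc m) (Suc (Suc m))) \<circ> inv (w0 n)"
    using Y1_elim assms .
  have "z (Suc m) = Suc m"
    using z by (auto simp: FPF_def permutes_def)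
  moreover have "w0 n 1 = Suc (Suc m)" and "w0 n (Suc m) = 2"
    using n by (simp_all add: w0_def)
  ultimately show ?thesis
    using x by (simp add: inv_w0)
qed

lemma nu_FPF: "x \<in> FPF n \<Longrightarrow> Suc j \<le> n \<Longrightarrow> nu j x \<in> FPF n"
  unfolding nu_def by (intro FPF_conj sigma_permutes)

lemma bruhat_step_nu_Suc:
  assumes x: "x \<in> FPF n" "x 1 = 2" and k: "1 \<le> k" "Suc (Suc k) \<le> n"
  shows "bruhat_step n (nu k x) (nu (Suc k) x)"
proof -
  let ?w = "nu k x"
  have wF: "?w \<in> FPF n"
    using nu_FPF x k by simp
  then have wp: "?w permutes {1..n}" and ww: "?w \<circ> ?w = id"
    unfolding FPF_def by auto
  have "?w (Suc k) = 1"
    using nu_apply_Suc k x by simp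
  moreover have "?w (Suc (Suc k)) \<in> {1..n}" and "?w (Suc (Suc k)) \<noteq> ?w (Suc k)"
    using permutes_in_image[OF wp] permutes_inj[OF wp] k by (auto dest: injD)
  ultimately have "?w (Suc k) < ?w (Suc (Suc k))"
    by auto
  then have "len n ?w \<le> len n (nu (Suc k) x)"
    using len_le_len_conj_s[OF ww _ k(2)] nu_Suc by simp
  then show ?thesis
    unfolding bruhat_step_def using wF k nu_Suc[of k x]
    by (intro conjI exI[of _ "Suc k"] exI[of _ "Suc (Suc k)"]) (auto simp: s_def)
qed

lemma rtranclp_consecutive:
  assumes "i \<le> j" and "\<And>k. i \<le> k \<Longrightarrow> k < j \<Longrightarrow> R (f k) (f (Suc k))"
  shows "R\<^sup>*\<^sup>* (f i) (f j)"
  using assms by (induction j rule: dec_induct) (auto intro: rtranclp.rtrancl_into_rtrancl)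

theorem corollary3p6:
  fixes n i j :: nat and x :: "nat \<Rightarrow> nat"
  assumes "even n" and "4 \<le> n" and "x \<in> Y1 n"
    and "1 \<le> i" and "i \<le> j" and "j \<le> n - 1"
  shows "bruhat_le n (nu i x) (nu j x)"
proof -
  have "2 \<le> n"
    using assms(2) by simp
  then have x: "x \<in> FPF n" "x 1 = 2"
    using Y1_FPF Y1_apply_one assms(3) by auto
  have "(bruhat_step n)\<^sup>*\<^sup>* (nu i x) (nu j x)"
    using assms(4-6) by (intro rtranclp_consecutive) (auto intro: bruhat_step_nu_Suc x)
  moreover have "nu i x \<in> FPF n" and "nu j x \<in> FPF n"
    using nu_FPF x assms(4-6) by auto
  ultimately show ?thesis
    unfolding bruhat_le_def by simp
qed

end
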